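(* Let $g>0$, $k_1,k_2,\omega\in\mathbb{R}$ with $k_2<0<k_1$, and consider the undamped system $$\ddot x-2\omega\dot y+(gk_1-\omega^2)x=0,\qquad \ddot y+2\omega\dot x+(gk_2-\omega^2)y=0.$$ (i) If $k_1>-k_2$, then all eigenvalues of this system are purely imaginary and simple if and only if $\omega^2>gk_1$. (ii) If $k_1<-k_2$ and $3k_1+k_2>0$, then all eigenvalues are purely imaginary and simple if and only if $$gk_1<\omega^2<-\frac{g}{8}\frac{(k_1-k_2)^2}{k_1+k_2}.$$ (iii) If $k_1<-k_2$ and $3k_1+k_2<0$, then for no $\omega$ are all eigenvalues purely imaginary and simple.
   Context: The eigenvalues are the roots $\lambda$ of $(\lambda^2+gk_1-\omega^2)(\lambda^2+gk_2-\omega^2)+4\omega^2\lambda^2=0$ (the model of a point mass near the bottom of a vessel rotating with angular velocity $\omega$, $k_1,k_2$ the curvatures of the vessel's surface at the equilibrium). *)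

theory Defs
  imports Complex_Main "HOL-Computational_Algebra.Polynomial"
begin

text \<open>Characteristic polynomial of the undamped system
  x'' - 2 w y' + (g k1 - w^2) x = 0,  y'' + 2 w x' + (g k2 - w^2) y = 0:
  (L^2 + g k1 - w^2)(L^2 + g k2 - w^2) + 4 w^2 L^2, with complex coefficients.\<close>
definition char_poly :: "real \<Rightarrow> real \<Rightarrow> real \<Rightarrow> real \<Rightarrow> complex poly" where
  "char_poly g k1 k2 w =
     [:complex_of_real (g*k1 - w^2), 0, 1:] * [:complex_of_real (g*k2 - w^2), 0, 1:]
     + smult (complex_of_real (4 * w^2)) [:0, 0, 1:]"

definition eigenvalue :: "real \<Rightarrow> real \<Rightarrow> real \<Rightarrow> real \<Rightarrow> complex \<Rightarrow> bool" where
  "eigenvalue g k1 k2 w z \<longleftrightarrow> poly (char_poly g k1 k2 w) z = 0"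

definition all_eigs_imag_simple :: "real \<Rightarrow> real \<Rightarrow> real \<Rightarrow> real \<Rightarrow> bool" where
  "all_eigs_imag_simple g k1 k2 w \<longleftrightarrow>
     (\<forall>z. eigenvalue g k1 k2 w z \<longrightarrow> Re z = 0 \<and> order z (char_poly g k1 k2 w) = 1)"

end

theory Submission
  imports Defs
begin

text \<open>The characteristic polynomial is biquadratic,
  \<open>z\<^sup>4 + B z\<^sup>2 + C\<close> with \<open>B = g (k\<^sub>1 + k\<^sub>2) + 2 \<omega>\<^sup>2\<close> and
  \<open>C = (g k\<^sub>1 - \<omega>\<^sup>2) (g k\<^sub>2 - \<omega>\<^sup>2)\<close>. A root \<open>z\<close> lies on the imaginary axis and is
  nonzero iff \<open>z\<^sup>2\<close> is a negative real, and its derivative \<open>2z (2z\<^sup>2 + B)\<close> vanishes iff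
  \<open>z = 0\<close> or \<open>z\<^sup>2\<close> is a double root of \<open>u\<^sup>2 + B u + C\<close>. So all eigenvalues are purely
  imaginary and simple iff this quadratic has two distinct negative real roots, i.e.
  \<open>C > 0\<close>, \<open>B > 0\<close> and \<open>B\<^sup>2 > 4C\<close>. Since \<open>k\<^sub>2 < 0\<close>, the first condition is \<open>\<omega>\<^sup>2 > g k\<^sub>1\<close>;
  the three cases of the theorem are then elementary inequalities in \<open>\<omega>\<^sup>2\<close>.\<close>

lemma order_eq_1_iff_pderiv:
  fixes p :: "'a::{idom,semiring_char_0} poly"
  assumes "p \<noteq> 0" and "poly p z = 0"
  shows "order z p = 1 \<longleftrightarrow> poly (pderiv p) z \<noteq> 0"
proof -
  have "degree p \<noteq> 0"
  proof
    assume "degree p = 0"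
    then obtain c where "p = [:c:]"
      by (rule degree_eq_zeroE)
    with assms show False
      by simp
  qed
  then have "pderiv p \<noteq> 0"
    by (simp add: pderiv_eq_0_iff)
  then show ?thesis
    using order_pderiv[OF assms] order_eq_0_iff by simp
qed

lemma Re_eq_0_nonzero_iff_square:
  "Re z = 0 \<and> z \<noteq> 0 \<longleftrightarrow> z^2 \<in> \<real> \<and> Re (z^2) < 0"
  by (auto simp: complex_eq_iff complex_is_Real_iff Re_power2 Im_power2)

lemma negative_iff_sum_product: "x < 0 \<and> y < 0 \<longleftrightarrow> x + y < 0 \<and> 0 < x * (y::real)"
  using zero_less_mult_iff by fastforce

lemma quadratic_roots_real_negative_distinct_iff:
  fixes b c :: real
  shows "(\<forall>u::complex. u^2 + of_real b * u + of_real c = 0 \<longrightarrow>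
            u \<in> \<real> \<and> Re u < 0 \<and> 2 * u + of_real b \<noteq> 0)
     \<longleftrightarrow> 0 < c \<and> 0 < b \<and> 4 * c < b^2"
proof (cases "b^2 < 4 * c")
  case True
  define u where "u = Complex (- b / 2) (sqrt (4 * c - b^2) / 2)"
  have "u^2 + of_real b * u + of_real c = 0"
    using True by (simp add: u_def complex_eq_iff power2_eq_square field_simps)
  moreover have "u \<notin> \<real>"
    using True by (simp add: u_def complex_is_Real_iff)
  ultimately show ?thesis
    using True by auto
next
  case False
  define s where "s = sqrt (b^2 - 4 * c)"
  define r1 r2 where "r1 = (- b + s) / 2" and "r2 = (- b - s) / 2"
  have s: "s^2 = b^2 - 4 * c"
    using False by (simp add: s_def)
  have vieta: "r1 + r2 = - b" "r1 * r2 = c"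
    using s by (simp_all add: r1_def r2_def field_simps power2_eq_square)
  moreover have "(u - of_real r1) * (u - of_real r2) =
      u^2 - of_real (r1 + r2) * u + of_real (r1 * r2)" for u :: complex
    by (simp add: algebra_simps power2_eq_square)
  ultimately have "u^2 + of_real b * u + of_real c = (u - of_real r1) * (u - of_real r2)"
    for u :: complex
    by simp
  then have roots: "u^2 + of_real b * u + of_real c = 0 \<longleftrightarrow> u = of_real r1 \<or> u = of_real r2"
    for u :: complex
    by simp
  have "2 * of_real r + of_real b = (of_real (2 * r + b) :: complex)" for r
    by simp
  then have "(\<forall>u::complex. u^2 + of_real b * u + of_real c = 0 \<longrightarrow>
            u \<in> \<real> \<and> Re u < 0 \<and> 2 * u + of_real b \<noteq> 0)
      \<longleftrightarrow> r1 < 0 \<and> r2 < 0 \<and> 2 * r1 + b \<noteq> 0 \<and> 2 * r2 + b \<noteq> 0"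
    unfolding roots by (auto simp del: of_real_add of_real_mult)
  also have "\<dots> \<longleftrightarrow> r1 + r2 < 0 \<and> 0 < r1 * r2 \<and> s \<noteq> 0"
  proof -
    have "2 * r1 + b = s" "2 * r2 + b = - s"
      by (simp_all add: r1_def r2_def field_simps)
    then show ?thesis
      using negative_iff_sum_product[of r1 r2] by auto
  qed
  also have "\<dots> \<longleftrightarrow> 0 < c \<and> 0 < b \<and> 4 * c < b^2"
    using vieta False by (auto simp: s_def)
  finally show ?thesis .
qed

lemma biquadratic_roots_imaginary_simple_iff:
  fixes b c :: real
  defines "p \<equiv> [:of_real c, 0, of_real b, 0, 1:] :: complex poly"
  shows "(\<forall>z. poly p z = 0 \<longrightarrow> Re z = 0 \<and> order z p = 1) \<longleftrightarrow> 0 < c \<and> 0 < b \<and> 4 * c < b^2"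
proof -
  define q where "q u = u^2 + of_real b * u + of_real c" for u :: complex
  have poly_p: "poly p z = q (z^2)" for z
    by (simp add: p_def q_def algebra_simps power2_eq_square)
  have poly_pderiv_p: "poly (pderiv p) z = 2 * z * (2 * z^2 + of_real b)" for z
    by (simp add: p_def pderiv_pCons algebra_simps power2_eq_square)
  have "p \<noteq> 0"
    by (simp add: p_def)
  then have "Re z = 0 \<and> order z p = 1 \<longleftrightarrow>
      z^2 \<in> \<real> \<and> Re (z^2) < 0 \<and> 2 * z^2 + of_real b \<noteq> 0" if "poly p z = 0" for z
  proof -
    have "order z p = 1 \<longleftrightarrow> z \<noteq> 0 \<and> 2 * z^2 + of_real b \<noteq> 0"
      using order_eq_1_iff_pderiv[OF \<open>p \<noteq> 0\<close> that] by (simp add: poly_pderiv_p)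
    then show ?thesis
      using Re_eq_0_nonzero_iff_square[of z] by blast
  qed
  then have "(\<forall>z. poly p z = 0 \<longrightarrow> Re z = 0 \<and> order z p = 1) \<longleftrightarrow>
      (\<forall>z. q (z^2) = 0 \<longrightarrow> z^2 \<in> \<real> \<and> Re (z^2) < 0 \<and> 2 * z^2 + of_real b \<noteq> 0)"
    by (auto simp: poly_p)
  also have "\<dots> \<longleftrightarrow> (\<forall>u. q u = 0 \<longrightarrow> u \<in> \<real> \<and> Re u < 0 \<and> 2 * u + of_real b \<noteq> 0)"
    by (metis power2_csqrt)
  also have "\<dots> \<longleftrightarrow> 0 < c \<and> 0 < b \<and> 4 * c < b^2"
    unfolding q_def by (rule quadratic_roots_real_negative_distinct_iff)
  finally show ?thesis .
qed

lemma char_poly_eq_biquadratic: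
  "char_poly g k1 k2 w =
     [:of_real ((g * k1 - w^2) * (g * k2 - w^2)), 0, of_real (g * (k1 + k2) + 2 * w^2), 0, 1:]"
  by (simp add: char_poly_def algebra_simps)

lemma all_eigs_imag_simple_iff:
  assumes "0 < g" and "k2 < 0"
  shows "all_eigs_imag_simple g k1 k2 w \<longleftrightarrow>
    g * k1 < w^2 \<and> 0 < g * (k1 + k2) + 2 * w^2 \<and> 0 < g * (k1 - k2)^2 + 8 * w^2 * (k1 + k2)"
proof -
  have k2_term: "g * k2 - w^2 < 0"
    using mult_pos_neg[OF assms] zero_le_power2[of w] by linarith
  have "all_eigs_imag_simple g k1 k2 w \<longleftrightarrow>
      0 < (g * k1 - w^2) * (g * k2 - w^2) \<and> 0 < g * (k1 + k2) + 2 * w^2 \<and>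
      4 * ((g * k1 - w^2) * (g * k2 - w^2)) < (g * (k1 + k2) + 2 * w^2)^2"
    unfolding all_eigs_imag_simple_def eigenvalue_def char_poly_eq_biquadratic
    by (rule biquadratic_roots_imaginary_simple_iff)
  moreover from k2_term have "0 < (g * k1 - w^2) * (g * k2 - w^2) \<longleftrightarrow> g * k1 < w^2"
    by (simp add: mult_less_0_iff zero_less_mult_iff)
  moreover have "4 * ((g * k1 - w^2) * (g * k2 - w^2)) < (g * (k1 + k2) + 2 * w^2)^2 \<longleftrightarrow>
      0 < g * (g * (k1 - k2)^2 + 8 * w^2 * (k1 + k2))"
    by (simp add: power2_eq_square algebra_simps)
  ultimately show ?thesis
    using assms by (simp add: zero_less_mult_iff)
qed

lemma trace_and_discriminant_not_both_pos:
  fixes g k1 k2 W :: real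
  assumes "0 < g" and "0 < k1" and "k2 < 0" and "3 * k1 + k2 < 0"
  shows "\<not> (0 < g * (k1 + k2) + 2 * W \<and> 0 < g * (k1 - k2)^2 + 8 * W * (k1 + k2))"
proof
  assume pos: "0 < g * (k1 + k2) + 2 * W \<and> 0 < g * (k1 - k2)^2 + 8 * W * (k1 + k2)"
  define t where "t = - (k1 + k2)"
  have "0 < t" "k1 - k2 < 2 * t" "0 < k1 - k2"
    using assms by (simp_all add: t_def)
  have "g * t < 2 * W"
    using pos by (simp add: t_def algebra_simps)
  then have "4 * g * t^2 < 8 * W * t"
    using mult_strict_left_mono[of "g * t" "2 * W" "4 * t"] \<open>0 < t\<close>
    by (simp add: power2_eq_square algebra_simps)
  also have "\<dots> < g * (k1 - k2)^2"
    using pos by (simp add: t_def algebra_simps)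
  finally have "g * (2 * t)^2 < g * (k1 - k2)^2"
    by (simp add: power_mult_distrib mult_ac)
  then have "(2 * t)^2 < (k1 - k2)^2"
    using \<open>0 < g\<close> by simp
  then show False
    using power_strict_mono[OF \<open>k1 - k2 < 2 * t\<close>, of 2] \<open>0 < k1 - k2\<close> by simp
qed

theorem mainTheorem7:
  fixes g k1 k2 :: real
  assumes "g > 0" and "k2 < 0" and "0 < k1"
  shows "(k1 > - k2 \<longrightarrow>
            (\<forall>w::real. all_eigs_imag_simple g k1 k2 w \<longleftrightarrow> w^2 > g * k1))
       \<and> (k1 < - k2 \<and> 3 * k1 + k2 > 0 \<longrightarrow>
            (\<forall>w::real. all_eigs_imag_simple g k1 k2 w \<longleftrightarrow>
                 g * k1 < w^2 \<and> w^2 < - (g / 8) * ((k1 - k2)^2 / (k1 + k2))))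
       \<and> (k1 < - k2 \<and> 3 * k1 + k2 < 0 \<longrightarrow>
            (\<forall>w::real. \<not> all_eigs_imag_simple g k1 k2 w))"
proof (intro conjI impI allI)
  fix w :: real
  have "0 < g * (k1 - k2)^2"
    using assms by simp
  note eigs = all_eigs_imag_simple_iff[OF \<open>g > 0\<close> \<open>k2 < 0\<close>, of k1 w]
  {
    assume "k1 > - k2"
    then show "all_eigs_imag_simple g k1 k2 w \<longleftrightarrow> w^2 > g * k1"
      using \<open>0 < g * (k1 - k2)^2\<close> \<open>g > 0\<close> by (simp add: eigs add_pos_nonneg)
  next
    assume regime: "k1 < - k2 \<and> 3 * k1 + k2 > 0"
    then have "0 < g * (3 * k1 + k2)"
      using \<open>g > 0\<close> by simp
    then have "g * k1 < w^2 \<Longrightarrow> 0 < g * (k1 + k2) + 2 * w^2"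
      by (simp add: algebra_simps)
    with regime show "all_eigs_imag_simple g k1 k2 w \<longleftrightarrow>
        g * k1 < w^2 \<and> w^2 < - (g / 8) * ((k1 - k2)^2 / (k1 + k2))"
      using \<open>g > 0\<close> by (auto simp: eigs field_simps)
  next
    assume "k1 < - k2 \<and> 3 * k1 + k2 < 0"
    then show "\<not> all_eigs_imag_simple g k1 k2 w"
      using trace_and_discriminant_not_both_pos[OF assms(1,3,2)] by (simp add: eigs)
  }
qed

end
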